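(* For $\tau\in P\Lambda^{n-k,k}$ the map $\Psi_\tau(f)[B]=D(f)[1_{\pi^{-1}(B)}\tau] $ is given for $f\in\mathrm{Conv}(\mathbb{R}^n,\mathbb{R})\cap C^2(\mathbb{R}^n)$ by \begin{align*} \Psi_\tau(f)[B]=\int_{B}P_\tau(D^2f(x))d\mathrm{vol}_n(x)\quad\text{for all bounded Borel sets } B\subset\mathbb{R}^n. \end{align*}
   Context: $\mathrm{Conv}(\mathbb{R}^n,\mathbb{R})$ denotes the finite-valued convex functions on $\mathbb{R}^n$. $P\Lambda^{n-k,k}$ is the space of constant complex forms in $\Lambda^{n-k}\mathbb{R}^n\otimes\Lambda^k(\mathbb{R}^n)^*$ on $T^*\mathbb{R}^n=\mathbb{R}^n\times(\mathbb{R}^n)^*$ that are primitive ($\omega_s\wedge\tau=0$ for the symplectic form $\omega_s$); $\pi$ is the projection onto the first factor and $D(f)$ Fu's differential cycle. Extending $\tau$ $\mathbb{C}$-linearly to a constant holomorphic form on $\mathbb{C}^n\times(\mathbb{C}^n)^*$, $P_\tau$ is the polynomial on complex symmetric $(n\times n)$-matrices defined by $F_Q^*\tau=P_\tau(Q)dz_1\wedge\dots\wedge dz_n$, where $F_Q(z)=(z,z^TQ)$. *)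

theory Defs
  imports "HOL-Analysis.Analysis"
begin

text \<open>Constant forms of degree n on T*R^n = R^n x (R^n)^* (both identified with real^'n),
  n = CARD('n), are represented as complex-valued functions of n-tuples of tangent vectors,
  the tuples being indexed by 'n.\<close>

type_synonym 'n form = "('n \<Rightarrow> ((real^'n) \<times> (real^'n))) \<Rightarrow> complex"

definition wedge1 :: "('i::finite \<Rightarrow> ('v \<Rightarrow> real)) \<Rightarrow> ('i \<Rightarrow> 'v) \<Rightarrow> real" where
  "wedge1 \<alpha> v = det (\<chi> a b. \<alpha> a (v b))"

definition xcov :: "((real^'n) \<times> (real^'n) \<Rightarrow> real) \<Rightarrow> bool" where
  "xcov a \<longleftrightarrow> linear a \<and> (\<forall>x y. a (x, y) = a (x, 0))"

definition ycov :: "((real^'n) \<times> (real^'n) \<Rightarrow> real) \<Rightarrow> bool" where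
  "ycov a \<longleftrightarrow> linear a \<and> (\<forall>x y. a (x, y) = a (0, y))"

text \<open>A family of n real 1-forms, k of them on the second factor and n-k on the first one;
  their wedge is a decomposable form in Lambda^{n-k,k}.\<close>
definition bideg_family :: "nat \<Rightarrow> ('n::finite \<Rightarrow> ((real^'n) \<times> (real^'n) \<Rightarrow> real)) \<Rightarrow> bool" where
  "bideg_family k \<alpha> \<longleftrightarrow> (\<exists>K. card K = k \<and> (\<forall>c\<in>K. ycov (\<alpha> c)) \<and> (\<forall>c. c \<notin> K \<longrightarrow> xcov (\<alpha> c)))"

text \<open>The family dx_i, dy_i, alpha_1, ..., alpha_n; its wedge is dx_i wedge dy_i wedge alpha.\<close>
definition sympl_ext :: "'n \<Rightarrow> ('n \<Rightarrow> ((real^'n) \<times> (real^'n) \<Rightarrow> real))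
    \<Rightarrow> 'n option option \<Rightarrow> ((real^'n) \<times> (real^'n) \<Rightarrow> real)" where
  "sympl_ext i \<alpha> a = (case a of None \<Rightarrow> (\<lambda>(x, y). x $ i)
                                | Some None \<Rightarrow> (\<lambda>(x, y). y $ i)
                                | Some (Some c) \<Rightarrow> \<alpha> c)"

text \<open>P Lambda^{n-k,k}: complex linear combinations of decomposable forms of bidegree (n-k,k)
  such that omega_s wedge tau = 0, where omega_s = sum_i dx_i wedge dy_i.\<close>
definition PLambda :: "nat \<Rightarrow> ('n::finite) form \<Rightarrow> bool" where
  "PLambda k \<tau> \<longleftrightarrow> (\<exists>(F :: nat set) (c :: nat \<Rightarrow> complex) \<alpha>.
      finite F \<and> (\<forall>j\<in>F. bideg_family k (\<alpha> j)) \<and>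
      \<tau> = (\<lambda>v. \<Sum>j\<in>F. c j * complex_of_real (wedge1 (\<alpha> j) v)) \<and>
      (\<forall>w. (\<Sum>j\<in>F. c j * complex_of_real (\<Sum>i\<in>UNIV. wedge1 (sympl_ext i (\<alpha> j)) w)) = 0))"

text \<open>C-linear (multilinear) extension of tau to complex tangent vectors.\<close>
definition form_C :: "('n::finite) form \<Rightarrow> ('n \<Rightarrow> ((complex^'n) \<times> (complex^'n))) \<Rightarrow> complex" where
  "form_C \<tau> w = (\<Sum>S\<in>(UNIV :: 'n set set). \<i> ^ card S *
      \<tau> (\<lambda>c. if c \<in> S then ((\<chi> j. Im (fst (w c) $ j)), (\<chi> j. Im (snd (w c) $ j)))
               else ((\<chi> j. Re (fst (w c) $ j)), (\<chi> j. Re (snd (w c) $ j)))))"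

text \<open>P_tau(Q): F_Q^* tau = P_tau(Q) dz_1 ... dz_n with F_Q(z) = (z, z^T Q).\<close>
definition P_tau :: "('n::finite) form \<Rightarrow> complex^'n^'n \<Rightarrow> complex" where
  "P_tau \<tau> Q = form_C \<tau> (\<lambda>c. (axis c 1, axis c 1 v* Q))"

text \<open>Subgradient, and the resolvent (I + subdifferential)^{-1} of a convex function.\<close>
definition subgrad :: "(real^'n \<Rightarrow> real) \<Rightarrow> real^'n \<Rightarrow> real^'n \<Rightarrow> bool" where
  "subgrad f x y \<longleftrightarrow> (\<forall>z. f x + y \<bullet> (z - x) \<le> f z)"

definition resolv :: "(real^'n \<Rightarrow> real) \<Rightarrow> real^'n \<Rightarrow> real^'n" where
  "resolv f u = (THE x. subgrad f x (u - x))"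

definition jac_ae :: "(real^'n \<Rightarrow> real^'n) \<Rightarrow> real^'n \<Rightarrow> real^'n^'n" where
  "jac_ae g u = (if g differentiable (at u) then jacobian g (at u) else 0)"

text \<open>Fu's differential cycle D(f) of a convex f is the integration current over the graph
  {(x,y). y in subdiff f x} of the subdifferential, oriented by the projection to the
  x-space; we parametrise it (Minty) by u |-> (J u, u - J u), J = resolv f (Lipschitz).
  This is D(f)[1_{pi^{-1}(B)} tau].\<close>
definition Dcycle :: "(real^'n::finite \<Rightarrow> real) \<Rightarrow> 'n form \<Rightarrow> (real^'n) set \<Rightarrow> complex" where
  "Dcycle f \<tau> B = integral\<^sup>L lborel (\<lambda>u. indicator B (resolv f u) *
      \<tau> (\<lambda>c. (jac_ae (resolv f) u *v axis c 1, (mat 1 - jac_ae (resolv f) u) *v axis c 1)))"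

definition Psi :: "'n form \<Rightarrow> (real^'n::finite \<Rightarrow> real) \<Rightarrow> (real^'n) set \<Rightarrow> complex" where
  "Psi \<tau> f B = Dcycle f \<tau> B"

end

theory Submission
  imports Defs
begin

text \<open>For a convex \<open>C\<^sup>2\<close> function \<open>f\<close> the map \<open>\<Phi> x = x + \<nabla>f x\<close> is a diffeomorphism of
  \<open>\<real>\<^sup>n\<close> (Minty) whose inverse is the resolvent \<open>J\<close> parametrising \<open>D(f)\<close>, and
  \<open>DJ u = (I + D\<^sup>2f (J u))\<^sup>-\<^sup>1\<close>. The tangent tuple of \<open>D(f)\<close> at \<open>u\<close> is therefore
  \<open>(A e\<^sub>c, D\<^sup>2f (J u) A e\<^sub>c)\<close> with \<open>A = DJ u\<close>, and multilinearity turns the integrand into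
  \<open>\<tau>(e\<^sub>c, D\<^sup>2f e\<^sub>c)(J u) / det (I + D\<^sup>2f (J u))\<close>. Substituting \<open>u = \<Phi> x\<close> cancels the
  determinant, and since the Hessian is real and symmetric, \<open>\<tau>(e\<^sub>c, D\<^sup>2f(x) e\<^sub>c)\<close> is
  \<open>P\<^sub>\<tau>(D\<^sup>2f(x))\<close>.\<close>

section \<open>Matrices\<close>

lemma permutes_conj_bij:
  fixes r :: "'m::finite \<Rightarrow> 'n::finite"
  assumes "bij r" and "p permutes UNIV"
  shows "(\<lambda>x. r (p (inv r x))) permutes UNIV" and "sign (\<lambda>x. r (p (inv r x))) = sign p"
proof -
  interpret permutes_bij_finite p UNIV UNIV r "inv r" "\<lambda>x. r (p (inv r x))"
    by unfold_locales (use assms in \<open>auto simp: bij_is_inj\<close>)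
  show "(\<lambda>x. r (p (inv r x))) permutes UNIV" and "sign (\<lambda>x. r (p (inv r x))) = sign p"
    using permutes_p' sign_p' by simp_all
qed

lemma det_reindex:
  fixes A :: "'a::comm_ring_1^'n::finite^'n" and r :: "'m::finite \<Rightarrow> 'n"
  assumes r: "bij r"
  shows "det (\<chi> i j. A $ r i $ r j) = det A"
proof -
  have rinv [simp]: "r (inv r x) = x" and invr [simp]: "inv r (r y) = y" for x y
    using r by (auto simp: bij_is_inj bij_is_surj surj_f_inv_f)
  have "det (\<chi> i j. A $ r i $ r j) =
      (\<Sum>p | p permutes (UNIV::'m set). of_int (sign p) * (\<Prod>i\<in>UNIV. A $ r i $ r (p i)))"
    unfolding det_def by simp
  also have "\<dots> = (\<Sum>q | q permutes (UNIV::'n set). of_int (sign q) * (\<Prod>k\<in>UNIV. A $ k $ q k))"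
  proof (rule sum.reindex_bij_witness[where i = "\<lambda>q x. inv r (q (r x))" and j = "\<lambda>p x. r (p (inv r x))"])
    fix p assume p: "p \<in> {p. p permutes (UNIV::'m set)}"
    have "(\<Prod>i\<in>UNIV. A $ r i $ r (p i)) = (\<Prod>k\<in>UNIV. A $ k $ r (p (inv r k)))"
      by (rule prod.reindex_bij_witness[where j = r and i = "inv r"]) auto
    then show "of_int (sign (\<lambda>x. r (p (inv r x)))) * (\<Prod>k\<in>UNIV. A $ k $ r (p (inv r k))) =
        of_int (sign p) * (\<Prod>i\<in>UNIV. A $ r i $ r (p i))"
      using permutes_conj_bij[OF r] p by simp
    show "(\<lambda>x. r (p (inv r x))) \<in> {q. q permutes UNIV}"
      using permutes_conj_bij[OF r] p by simp
  next
    fix q assume "q \<in> {q. q permutes (UNIV::'n set)}"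
    then show "(\<lambda>x. inv r (q (r x))) \<in> {p. p permutes UNIV}"
      using permutes_conj_bij(1)[OF bij_imp_bij_inv[OF r], of q] r by (simp add: inv_inv_eq)
  qed auto
  also have "\<dots> = det A" unfolding det_def by simp
  finally show ?thesis .
qed

lemma matrix_inv_inverse:
  fixes A :: "'a::semiring_1^'n^'m"
  assumes "invertible A"
  shows "A ** matrix_inv A = mat 1" and "matrix_inv A ** A = mat 1"
  using someI_ex[OF assms[unfolded invertible_def]] by (simp_all add: matrix_inv_def)

lemma det_matrix_inv:
  fixes A :: "real^'n^'n"
  assumes "invertible A"
  shows "det (matrix_inv A) = 1 / det A"
  using det_mul[of "matrix_inv A" A] matrix_inv_inverse(2)[OF assms] invertible_det_nz[of A] assms
  by (simp add: field_simps)

lemma invertible_id_plus_psd: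
  fixes A :: "real^'n^'n"
  assumes psd: "\<And>v. 0 \<le> (A *v v) \<bullet> v"
  shows "invertible (mat 1 + A)"
proof -
  have "v = 0" if "(mat 1 + A) *v v = 0" for v
  proof -
    from that have "v \<bullet> v + (A *v v) \<bullet> v = 0"
      by (metis inner_add_left inner_zero_left matrix_vector_mult_add_rdistrib matrix_vector_mul_lid)
    with psd[of v] show "v = 0"
      by (metis add_nonneg_eq_0_iff inner_eq_zero_iff inner_ge_zero)
  qed
  then show ?thesis
    by (simp add: invertible_left_inverse matrix_left_invertible_ker)
qed

lemma det_id_plus_psd_pos:
  fixes A :: "real^'n^'n"
  assumes psd: "\<And>v. 0 \<le> (A *v v) \<bullet> v"
  shows "det (mat 1 + A) > 0"
proof (rule ccontr)
  assume "\<not> det (mat 1 + A) > 0"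
  moreover define D where "D t = det (mat 1 + t *\<^sub>R A)" for t
  moreover have "continuous_on {0..1} D"
    unfolding D_def det_def by (auto simp: mat_def intro!: continuous_intros)
  ultimately obtain t where "0 \<le> t" "D t = 0"
    using IVT2'[of D 1 0 0] by force
  moreover have "0 \<le> ((t *\<^sub>R A) *v v) \<bullet> v" if "0 \<le> t" for v
    using psd[of v] that by (simp add: scaleR_matrix_vector_assoc[symmetric])
  ultimately show False
    using invertible_id_plus_psd[of "t *\<^sub>R A"] by (simp add: D_def invertible_det_nz)
qed

lemma mat_1_minus_matrix_inv_mult:
  fixes A :: "real^'n^'n"
  assumes "invertible (mat 1 + A)"
  shows "(mat 1 - matrix_inv (mat 1 + A)) *v v = A *v (matrix_inv (mat 1 + A) *v v)"
proof -
  have "(mat 1 + A) *v (matrix_inv (mat 1 + A) *v v) = v"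
    by (simp add: matrix_vector_mul_assoc matrix_inv_inverse(1)[OF assms])
  then show ?thesis
    by (simp add: matrix_vector_mult_add_rdistrib matrix_vector_mult_diff_rdistrib algebra_simps)
qed

lemma matrix_entry_dist_le: "\<bar>A $ i $ j - B $ i $ j\<bar> \<le> dist A (B :: real^'n^'m)"
proof -
  have "\<bar>(A - B) $ i $ j\<bar> \<le> norm ((A - B) $ i)" by (rule component_le_norm_cart)
  also have "\<dots> \<le> norm (A - B)" by (rule Finite_Cartesian_Product.norm_nth_le)
  finally show ?thesis by (simp add: dist_norm)
qed

section \<open>Change of variables over an arbitrary finite index type\<close>

text \<open>The change-of-variables theorems of HOL-Analysis require a well-ordered index type, so a
  finite index type is transported to a copy that is well-ordered through \<open>to_nat\<close>.\<close>

typedef 'a well_ordered = "UNIV :: 'a set" by simp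

instance well_ordered :: (finite) finite
proof
  have "(UNIV :: 'a well_ordered set) = Abs_well_ordered ` UNIV"
    by (metis Abs_well_ordered_cases surj_def)
  then show "finite (UNIV :: 'a well_ordered set)" by (metis finite_imageI finite)
qed

instantiation well_ordered :: (finite) wellorder
begin
definition less_eq_well_ordered :: "'a well_ordered \<Rightarrow> 'a well_ordered \<Rightarrow> bool" where
  "x \<le> y \<longleftrightarrow> to_nat (Rep_well_ordered x) \<le> to_nat (Rep_well_ordered y)"
definition less_well_ordered :: "'a well_ordered \<Rightarrow> 'a well_ordered \<Rightarrow> bool" where
  "x < y \<longleftrightarrow> to_nat (Rep_well_ordered x) < to_nat (Rep_well_ordered y)"
instance
proof
  fix P :: "'a well_ordered \<Rightarrow> bool" and a
  assume step: "\<And>x. (\<And>y. y < x \<Longrightarrow> P y) \<Longrightarrow> P x"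
  show "P a"
    by (induction "to_nat (Rep_well_ordered a)" arbitrary: a rule: less_induct)
      (use step in \<open>auto simp: less_well_ordered_def\<close>)
qed (auto simp: less_eq_well_ordered_def less_well_ordered_def Rep_well_ordered_inject[symmetric])
end

definition vec_to_wo :: "'a^'n \<Rightarrow> 'a^'n well_ordered" where
  "vec_to_wo x = (\<chi> i. x $ Rep_well_ordered i)"

definition vec_of_wo :: "'a^'n well_ordered \<Rightarrow> 'a^'n" where
  "vec_of_wo y = (\<chi> j. y $ Abs_well_ordered j)"

definition mat_to_wo :: "'a^'n^'n \<Rightarrow> 'a^'n well_ordered^'n well_ordered" where
  "mat_to_wo A = (\<chi> i j. A $ Rep_well_ordered i $ Rep_well_ordered j)"

lemma vec_to_wo_of_wo [simp]: "vec_to_wo (vec_of_wo y) = y"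
  by (simp add: vec_to_wo_def vec_of_wo_def Rep_well_ordered_inverse vec_eq_iff)

lemma vec_of_wo_to_wo [simp]: "vec_of_wo (vec_to_wo x) = x"
  by (simp add: vec_to_wo_def vec_of_wo_def Abs_well_ordered_inverse vec_eq_iff)

lemma bounded_linear_vec_to_wo: "bounded_linear (vec_to_wo :: real^'n \<Rightarrow> _)"
  by (auto simp: linear_conv_bounded_linear[symmetric] vec_to_wo_def vec_eq_iff intro!: linearI)

lemma bounded_linear_vec_of_wo: "bounded_linear (vec_of_wo :: _ \<Rightarrow> real^'n)"
  by (auto simp: linear_conv_bounded_linear[symmetric] vec_of_wo_def vec_eq_iff intro!: linearI)

lemma borel_measurable_vec_of_wo [measurable]: "(vec_of_wo :: _ \<Rightarrow> real^'n) \<in> borel_measurable borel"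
  by (intro borel_measurable_continuous_onI linear_continuous_on bounded_linear_vec_of_wo)

lemma sum_well_ordered:
  "(\<Sum>i\<in>UNIV. f (Rep_well_ordered i)) = (\<Sum>j\<in>UNIV. f j :: 'a::comm_monoid_add)"
  by (rule sum.reindex_bij_witness[where j = Rep_well_ordered and i = Abs_well_ordered])
     (auto simp: Abs_well_ordered_inverse Rep_well_ordered_inverse)

lemma prod_well_ordered:
  "(\<Prod>i\<in>UNIV. f (Rep_well_ordered i)) = (\<Prod>j\<in>UNIV. f j :: 'a::comm_monoid_mult)"
  by (rule prod.reindex_bij_witness[where j = Rep_well_ordered and i = Abs_well_ordered])
     (auto simp: Abs_well_ordered_inverse Rep_well_ordered_inverse)

lemma mat_to_wo_mult_vec: "mat_to_wo A *v v = vec_to_wo (A *v vec_of_wo v)"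
  using sum_well_ordered[of "\<lambda>j. A $ Rep_well_ordered _ $ j * v $ Abs_well_ordered j"]
  by (simp add: vec_eq_iff matrix_vector_mult_def mat_to_wo_def vec_to_wo_def vec_of_wo_def
      Rep_well_ordered_inverse)

lemma mat_to_wo_mult: "mat_to_wo (A ** B) = mat_to_wo A ** mat_to_wo B"
  by (simp add: vec_eq_iff matrix_matrix_mult_def mat_to_wo_def
      sum_well_ordered[of "\<lambda>k. A $ _ $ k * B $ k $ _"])

lemma mat_to_wo_1 [simp]: "mat_to_wo (mat 1) = mat 1"
  by (simp add: vec_eq_iff mat_def mat_to_wo_def Rep_well_ordered_inject)

lemma bij_Rep_well_ordered: "bij Rep_well_ordered"
  by (metis Rep_well_ordered_inverse Abs_well_ordered_inverse UNIV_I bij_betw_byWitness subset_UNIV)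

lemma det_mat_to_wo [simp]: "det (mat_to_wo A) = det A"
  unfolding mat_to_wo_def by (rule det_reindex[OF bij_Rep_well_ordered])

lemma prod_Basis_vec: "(\<Prod>b\<in>Basis. (x::real^'n) \<bullet> b) = (\<Prod>i\<in>UNIV. x $ i)"
  by (simp add: Basis_vec_def cart_eq_inner_axis axis_eq_axis prod.UNION_disjoint)

lemma distr_lborel_vec_of_wo: "distr lborel lborel vec_of_wo = (lborel :: (real^'n::finite) measure)"
proof (rule lborel_eqI[symmetric])
  fix l u :: "real^'n"
  assume le_Basis: "\<And>b. b \<in> Basis \<Longrightarrow> l \<bullet> b \<le> u \<bullet> b"
  have le: "l $ i \<le> u $ i" for i
    using le_Basis[of "axis i 1"] by (simp add: cart_eq_inner_axis)
  have "vec_of_wo -` box l u = box (vec_to_wo l) (vec_to_wo u)"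
    by (auto simp: mem_box_cart vec_of_wo_def vec_to_wo_def Abs_well_ordered_inverse)
      (metis Abs_well_ordered_inverse Rep_well_ordered_inverse UNIV_I)+
  then have "emeasure (distr lborel lborel vec_of_wo) (box l u) =
      emeasure lborel (box (vec_to_wo l) (vec_to_wo u))"
    by (simp add: emeasure_distr)
  also have "\<dots> = (\<Prod>b\<in>Basis. (vec_to_wo u - vec_to_wo l) \<bullet> b)"
    by (rule emeasure_lborel_box) (auto simp: Basis_vec_def inner_axis le vec_to_wo_def)
  also have "\<dots> = (\<Prod>b\<in>Basis. (u - l) \<bullet> b)"
    by (simp add: prod_Basis_vec vec_to_wo_def prod_well_ordered[of "\<lambda>j. u $ j - l $ j"])
  finally show "emeasure (distr lborel lborel vec_of_wo) (box l u) = (\<Prod>b\<in>Basis. (u - l) \<bullet> b)" .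
qed simp

lemma absolutely_integrable_UNIV_iff_lborel:
  fixes F :: "'a::euclidean_space \<Rightarrow> 'b::euclidean_space"
  assumes "F \<in> borel_measurable borel"
  shows "F absolutely_integrable_on UNIV \<longleftrightarrow> integrable lborel F"
  using assms by (simp add: set_integrable_def integrable_completion)

lemma lborel_change_of_variables_wellorder:
  fixes F :: "real^'m::{finite,wellorder} \<Rightarrow> real" and \<Phi> h :: "real^'m::_ \<Rightarrow> real^'m::_"
    and M N :: "real^'m::_ \<Rightarrow> real^'m::_^'m::_"
  assumes d\<Phi>: "\<And>x. (\<Phi> has_derivative (\<lambda>v. M x *v v)) (at x)"
    and dh: "\<And>y. (h has_derivative (\<lambda>v. N y *v v)) (at y)"
    and h\<Phi>: "\<And>x. h (\<Phi> x) = x" and \<Phi>h: "\<And>y. \<Phi> (h y) = y"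
    and NM: "\<And>y. N y ** M (h y) = mat 1"
    and F: "F \<in> borel_measurable borel"
    and int: "integrable lborel (\<lambda>x. \<bar>det (M x)\<bar> * F (\<Phi> x))"
  shows "integrable lborel F"
    and "integral\<^sup>L lborel F = integral\<^sup>L lborel (\<lambda>x. \<bar>det (M x)\<bar> * F (\<Phi> x))"
proof -
  let ?G = "\<lambda>x. \<bar>det (matrix ((*v) (M x)))\<bar> * F (\<Phi> x)"
  have "?G \<in> borel_measurable borel"
    using borel_measurable_integrable[OF int] by (simp add: matrix_of_matrix_vector_mul)
  then have "?G absolutely_integrable_on UNIV \<and> integral UNIV ?G = integral\<^sup>L lborel ?G"
    using int by (simp add: absolutely_integrable_UNIV_iff_lborel integral_lborel matrix_of_matrix_vector_mul)
  moreover have "?G absolutely_integrable_on UNIV \<and> integral UNIV ?G = integral\<^sup>L lborel ?G \<longleftrightarrow>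
      F absolutely_integrable_on UNIV \<and> integral UNIV F = integral\<^sup>L lborel ?G"
    by (rule cov_invertible_real[where h = h and h' = "\<lambda>y. (*v) (N y)"])
      (auto simp: d\<Phi> dh h\<Phi> \<Phi>h matrix_vector_mul_assoc NM fun_eq_iff)
  ultimately show "integrable lborel F"
    and "integral\<^sup>L lborel F = integral\<^sup>L lborel (\<lambda>x. \<bar>det (M x)\<bar> * F (\<Phi> x))"
    using F by (auto simp: absolutely_integrable_UNIV_iff_lborel integral_lborel matrix_of_matrix_vector_mul)
qed

lemma integrable_lborel_vec_of_wo_iff:
  fixes F :: "real^'n \<Rightarrow> 'b::{banach,second_countable_topology}"
  assumes "F \<in> borel_measurable borel"
  shows "integrable lborel (\<lambda>y. F (vec_of_wo y)) \<longleftrightarrow> integrable lborel F"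
  using integrable_distr_eq[of vec_of_wo lborel lborel F] assms
  by (simp add: distr_lborel_vec_of_wo)

lemma integral_lborel_vec_of_wo:
  fixes F :: "real^'n \<Rightarrow> 'b::{banach,second_countable_topology}"
  assumes "F \<in> borel_measurable borel"
  shows "integral\<^sup>L lborel (\<lambda>y. F (vec_of_wo y)) = integral\<^sup>L lborel F"
  using integral_distr[of vec_of_wo lborel lborel F] assms
  by (simp add: distr_lborel_vec_of_wo)

lemma lborel_change_of_variables_real:
  fixes F :: "real^'n \<Rightarrow> real" and \<Phi> h :: "real^'n \<Rightarrow> real^'n"
    and M N :: "real^'n \<Rightarrow> real^'n^'n"
  assumes d\<Phi>: "\<And>x. (\<Phi> has_derivative (\<lambda>v. M x *v v)) (at x)"
    and dh: "\<And>y. (h has_derivative (\<lambda>v. N y *v v)) (at y)"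
    and h\<Phi>: "\<And>x. h (\<Phi> x) = x" and \<Phi>h: "\<And>y. \<Phi> (h y) = y"
    and NM: "\<And>y. N y ** M (h y) = mat 1"
    and F: "F \<in> borel_measurable borel"
    and int: "integrable lborel (\<lambda>x. \<bar>det (M x)\<bar> * F (\<Phi> x))"
  shows "integrable lborel F"
    and "integral\<^sup>L lborel F = integral\<^sup>L lborel (\<lambda>x. \<bar>det (M x)\<bar> * F (\<Phi> x))"
proof -
  define conj :: "(real^'n \<Rightarrow> real^'n) \<Rightarrow> real^'n well_ordered \<Rightarrow> real^'n well_ordered"
    where "conj \<psi> = (\<lambda>y. vec_to_wo (\<psi> (vec_of_wo y)))" for \<psi>
  have d_conj: "(conj \<psi> has_derivative (\<lambda>v. mat_to_wo (D (vec_of_wo y)) *v v)) (at y)"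
    if "\<And>x. (\<psi> has_derivative (\<lambda>v. D x *v v)) (at x)" for \<psi> D y
    unfolding conj_def mat_to_wo_mult_vec
    by (rule has_derivative_compose[OF has_derivative_compose[OF
          bounded_linear_imp_has_derivative[OF bounded_linear_vec_of_wo] that]
          bounded_linear_imp_has_derivative[OF bounded_linear_vec_to_wo]])
  have G: "(\<lambda>x. \<bar>det (M x)\<bar> * F (\<Phi> x)) \<in> borel_measurable borel"
    using borel_measurable_integrable[OF int] by simp
  have "conj h (conj \<Phi> y) = y" and "conj \<Phi> (conj h y) = y" for y
    by (simp_all add: conj_def h\<Phi> \<Phi>h)
  moreover have "mat_to_wo (N (vec_of_wo y)) ** mat_to_wo (M (vec_of_wo (conj h y))) = mat 1" for y
    by (simp add: conj_def NM mat_to_wo_mult[symmetric])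
  moreover have "(\<lambda>y. F (vec_of_wo y)) \<in> borel_measurable borel"
    using F by measurable
  moreover have "integrable lborel
      (\<lambda>y. \<bar>det (mat_to_wo (M (vec_of_wo y)))\<bar> * F (vec_of_wo (conj \<Phi> y)))"
    using int by (simp add: conj_def integrable_lborel_vec_of_wo_iff[OF G])
  ultimately have "integrable lborel (\<lambda>y. F (vec_of_wo y))"
    and "integral\<^sup>L lborel (\<lambda>y. F (vec_of_wo y)) = integral\<^sup>L lborel
      (\<lambda>y. \<bar>det (mat_to_wo (M (vec_of_wo y)))\<bar> * F (vec_of_wo (conj \<Phi> y)))"
    using lborel_change_of_variables_wellorder[OF d_conj[OF d\<Phi>] d_conj[OF dh]] by blast+
  then show "integrable lborel F"
    and "integral\<^sup>L lborel F = integral\<^sup>L lborel (\<lambda>x. \<bar>det (M x)\<bar> * F (\<Phi> x))"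
    by (simp_all add: conj_def integrable_lborel_vec_of_wo_iff[OF F] integral_lborel_vec_of_wo[OF F]
        integral_lborel_vec_of_wo[OF G])
qed

lemma lborel_change_of_variables:
  fixes F :: "real^'n \<Rightarrow> 'b::euclidean_space" and \<Phi> h :: "real^'n \<Rightarrow> real^'n"
    and M N :: "real^'n \<Rightarrow> real^'n^'n"
  assumes d\<Phi>: "\<And>x. (\<Phi> has_derivative (\<lambda>v. M x *v v)) (at x)"
    and dh: "\<And>y. (h has_derivative (\<lambda>v. N y *v v)) (at y)"
    and h\<Phi>: "\<And>x. h (\<Phi> x) = x" and \<Phi>h: "\<And>y. \<Phi> (h y) = y"
    and NM: "\<And>y. N y ** M (h y) = mat 1"
    and F: "F \<in> borel_measurable borel"
    and int: "integrable lborel (\<lambda>x. \<bar>det (M x)\<bar> *\<^sub>R F (\<Phi> x))"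
  shows "integrable lborel F"
    and "integral\<^sup>L lborel F = integral\<^sup>L lborel (\<lambda>x. \<bar>det (M x)\<bar> *\<^sub>R F (\<Phi> x))"
proof -
  have "integrable lborel (\<lambda>x. \<bar>det (M x)\<bar> * (F (\<Phi> x) \<bullet> b))" for b
    using integrable_inner_left[OF int, of b] by simp
  moreover have "(\<lambda>y. F y \<bullet> b) \<in> borel_measurable borel" for b
    using F by measurable
  ultimately have int_b: "integrable lborel (\<lambda>y. F y \<bullet> b)"
    and eq_b: "integral\<^sup>L lborel (\<lambda>y. F y \<bullet> b) = integral\<^sup>L lborel (\<lambda>x. \<bar>det (M x)\<bar> * (F (\<Phi> x) \<bullet> b))"
    for b using lborel_change_of_variables_real[OF d\<Phi> dh h\<Phi> \<Phi>h NM] by blast+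
  have "integrable lborel (\<lambda>y. \<Sum>b\<in>Basis. (F y \<bullet> b) *\<^sub>R b)"
    using int_b by (intro Bochner_Integration.integrable_sum integrable_scaleR_left)
  then show int_F: "integrable lborel F"
    by (simp add: euclidean_representation)
  show "integral\<^sup>L lborel F = integral\<^sup>L lborel (\<lambda>x. \<bar>det (M x)\<bar> *\<^sub>R F (\<Phi> x))"
  proof (rule euclidean_eqI)
    fix b :: 'b
    have "integral\<^sup>L lborel F \<bullet> b = integral\<^sup>L lborel (\<lambda>y. F y \<bullet> b)"
      using int_F by simp
    also have "\<dots> = integral\<^sup>L lborel (\<lambda>x. \<bar>det (M x)\<bar> *\<^sub>R F (\<Phi> x)) \<bullet> b"
      using eq_b integral_inner_left[OF int, of b] by simp
    finally show "integral\<^sup>L lborel F \<bullet> b = integral\<^sup>L lborel (\<lambda>x. \<bar>det (M x)\<bar> *\<^sub>R F (\<Phi> x)) \<bullet> b" .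
  qed
qed

section \<open>Convex functions with continuous Hessian\<close>

lemma has_real_derivative_along_line:
  fixes F :: "'a::real_normed_vector \<Rightarrow> real"
  assumes "(F has_derivative F') (at (x + t *\<^sub>R v))"
  shows "((\<lambda>s. F (x + s *\<^sub>R v)) has_real_derivative F' v) (at t)"
proof -
  have "((\<lambda>s. x + s *\<^sub>R v) has_derivative (\<lambda>s. s *\<^sub>R v)) (at t)"
    by (auto intro!: derivative_eq_intros)
  from has_derivative_compose[OF this assms]
  have "((\<lambda>s. F (x + s *\<^sub>R v)) has_derivative (\<lambda>s. F' v * s)) (at t)"
    using linear_scale[OF has_derivative_linear[OF assms]] by (simp add: mult.commute)
  then show ?thesis
    by (simp add: has_field_derivative_def)
qed

lemma convex_on_gradient_ineq:
  fixes f :: "'a::real_normed_vector \<Rightarrow> real"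
  assumes cvx: "convex_on UNIV f" and df: "(f has_derivative f') (at x)"
  shows "f x + f' (z - x) \<le> f z"
proof -
  define \<phi> where "\<phi> s = f (x + s *\<^sub>R (z - x))" for s
  have cvx_\<phi>: "convex_on UNIV \<phi>"
  proof (rule convex_onI)
    fix t s r :: real
    assume "0 < t" "t < 1"
    moreover have "x + ((1 - t) * s + t * r) *\<^sub>R (z - x) =
        (1 - t) *\<^sub>R (x + s *\<^sub>R (z - x)) + t *\<^sub>R (x + r *\<^sub>R (z - x))"
      by (simp add: algebra_simps)
    ultimately show "\<phi> ((1 - t) *\<^sub>R s + t *\<^sub>R r) \<le> (1 - t) * \<phi> s + t * \<phi> r"
      using convex_onD[OF cvx, of t] by (simp add: \<phi>_def)
  qed simp
  have "(\<phi> has_real_derivative f' (z - x)) (at 0)"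
    unfolding \<phi>_def by (rule has_real_derivative_along_line) (simp add: df)
  from convex_on_imp_above_tangent[OF cvx_\<phi> connected_UNIV _ _ this, of 1]
  have "\<phi> 1 - \<phi> 0 \<ge> f' (z - x)" by simp
  then show ?thesis by (simp add: \<phi>_def)
qed

lemma monotone_derivative_nonneg:
  fixes g :: "'a::real_inner \<Rightarrow> 'a"
  assumes mono: "\<And>x y. 0 \<le> (g y - g x) \<bullet> (y - x)"
    and dg: "(g has_derivative g') (at x)"
  shows "0 \<le> g' v \<bullet> v"
proof (rule ccontr)
  assume "\<not> 0 \<le> g' v \<bullet> v"
  then have neg: "g' v \<bullet> v < 0" by simp
  have "((\<lambda>y. g y \<bullet> v) has_derivative (\<lambda>w. g' w \<bullet> v)) (at (x + 0 *\<^sub>R v))"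
    using dg by (auto intro!: derivative_eq_intros)
  from DERIV_neg_dec_right[OF has_real_derivative_along_line[OF this] neg]
  obtain d where "d > 0"
    and dec: "\<And>s. 0 < s \<Longrightarrow> s < d \<Longrightarrow> g (x + s *\<^sub>R v) \<bullet> v < g x \<bullet> v"
    by auto
  then have "(g (x + (d/2) *\<^sub>R v) - g x) \<bullet> ((x + (d/2) *\<^sub>R v) - x) < 0"
    by (simp add: inner_diff_left mult_pos_neg)
  with mono show False by (metis not_le)
qed

lemma mixed_difference_mean_value:
  fixes f :: "real^'n \<Rightarrow> real" and g :: "real^'n \<Rightarrow> real^'n" and H :: "real^'n \<Rightarrow> real^'n^'n"
  assumes df: "\<And>x. (f has_derivative (\<lambda>h. g x \<bullet> h)) (at x)"
    and dg: "\<And>x. (g has_derivative (\<lambda>h. H x *v h)) (at x)"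
    and s: "s > 0"
  obtains p where "norm (p - x) < 2 * s"
    and "f (x + s *\<^sub>R axis i 1 + s *\<^sub>R axis j 1) - f (x + s *\<^sub>R axis i 1) - f (x + s *\<^sub>R axis j 1) + f x
      = s * s * H p $ i $ j"
proof -
  let ?ei = "axis i (1::real)" and ?ej = "axis j (1::real)"
  define a where "a t = f (x + s *\<^sub>R ?ej + t *\<^sub>R ?ei) - f (x + t *\<^sub>R ?ei)" for t
  have "(a has_real_derivative g (x + s *\<^sub>R ?ej + t *\<^sub>R ?ei) \<bullet> ?ei - g (x + t *\<^sub>R ?ei) \<bullet> ?ei) (at t)"
    for t unfolding a_def by (intro DERIV_diff has_real_derivative_along_line df)
  then have "(a has_real_derivative g (x + s *\<^sub>R ?ej + t *\<^sub>R ?ei) $ i - g (x + t *\<^sub>R ?ei) $ i) (at t)"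
    for t by (simp add: inner_axis)
  from MVT2[OF s this] obtain \<xi> where \<xi>: "0 < \<xi>" "\<xi> < s"
    and a_diff: "a s - a 0 = s * (g (x + \<xi> *\<^sub>R ?ei + s *\<^sub>R ?ej) $ i - g (x + \<xi> *\<^sub>R ?ei + 0 *\<^sub>R ?ej) $ i)"
    by (auto simp: algebra_simps)
  have dgi: "((\<lambda>y. g y \<bullet> ?ei) has_derivative (\<lambda>h. (H p *v h) \<bullet> ?ei)) (at p)" for p
    using dg by (auto intro!: derivative_eq_intros)
  have "((\<lambda>r. g (x + \<xi> *\<^sub>R ?ei + r *\<^sub>R ?ej) $ i) has_real_derivative
      H (x + \<xi> *\<^sub>R ?ei + r *\<^sub>R ?ej) $ i $ j) (at r)" for r
    using has_real_derivative_along_line[OF dgi, where x = "x + \<xi> *\<^sub>R ?ei" and t = r and v = ?ej]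
    by (simp add: inner_axis matrix_vector_mult_basis column_def)
  from MVT2[OF s this] obtain \<eta> where \<eta>: "0 < \<eta>" "\<eta> < s"
    and b_diff: "g (x + \<xi> *\<^sub>R ?ei + s *\<^sub>R ?ej) $ i - g (x + \<xi> *\<^sub>R ?ei + 0 *\<^sub>R ?ej) $ i
      = s * H (x + \<xi> *\<^sub>R ?ei + \<eta> *\<^sub>R ?ej) $ i $ j"
    by auto
  show ?thesis
  proof
    have "norm (\<xi> *\<^sub>R ?ei + \<eta> *\<^sub>R ?ej) \<le> \<xi> + \<eta>"
      using norm_triangle_ineq[of "\<xi> *\<^sub>R ?ei" "\<eta> *\<^sub>R ?ej"] \<xi> \<eta> by simp
    then show "norm (x + \<xi> *\<^sub>R ?ei + \<eta> *\<^sub>R ?ej - x) < 2 * s"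
      using \<xi> \<eta> by (simp add: add.assoc)
    show "f (x + s *\<^sub>R ?ei + s *\<^sub>R ?ej) - f (x + s *\<^sub>R ?ei) - f (x + s *\<^sub>R ?ej) + f x
        = s * s * H (x + \<xi> *\<^sub>R ?ei + \<eta> *\<^sub>R ?ej) $ i $ j"
      using a_diff b_diff by (simp add: a_def add_ac)
  qed
qed

lemma hessian_symmetric:
  fixes f :: "real^'n \<Rightarrow> real" and g :: "real^'n \<Rightarrow> real^'n" and H :: "real^'n \<Rightarrow> real^'n^'n"
  assumes df: "\<And>x. (f has_derivative (\<lambda>h. g x \<bullet> h)) (at x)"
    and dg: "\<And>x. (g has_derivative (\<lambda>h. H x *v h)) (at x)"
    and cont: "isCont H x"
  shows "transpose (H x) = H x"
proof -
  have close: "\<bar>H x $ i $ j - H x $ j $ i\<bar> < 2 * e" if "e > 0" for i j e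
  proof -
    obtain d where "d > 0" and d: "\<And>y. dist y x < d \<Longrightarrow> dist (H y) (H x) < e"
      using cont \<open>e > 0\<close> unfolding continuous_at_eps_delta by blast
    define s where "s = d / 2"
    have "s > 0" using \<open>d > 0\<close> by (simp add: s_def)
    let ?\<Delta> = "\<lambda>i j. f (x + s *\<^sub>R axis i 1 + s *\<^sub>R axis j 1) - f (x + s *\<^sub>R axis i 1)
      - f (x + s *\<^sub>R axis j 1) + f x"
    obtain p where p: "norm (p - x) < 2 * s" "?\<Delta> i j = s * s * H p $ i $ j"
      using mixed_difference_mean_value[OF df dg \<open>s > 0\<close>] by blast
    obtain q where q: "norm (q - x) < 2 * s" "?\<Delta> j i = s * s * H q $ j $ i"
      using mixed_difference_mean_value[OF df dg \<open>s > 0\<close>] by blast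
    have "?\<Delta> i j = ?\<Delta> j i" by (simp add: add_ac)
    then have "H p $ i $ j = H q $ j $ i"
      using p(2) q(2) \<open>s > 0\<close> by simp
    moreover have "\<bar>H p $ i $ j - H x $ i $ j\<bar> < e" "\<bar>H q $ j $ i - H x $ j $ i\<bar> < e"
      using d[of p] d[of q] p(1) q(1) matrix_entry_dist_le[of "H p" i j "H x"]
        matrix_entry_dist_le[of "H q" j i "H x"]
      by (simp_all add: s_def dist_norm)
    ultimately show ?thesis by linarith
  qed
  have "H x $ i $ j = H x $ j $ i" for i j
    using close[of "\<bar>H x $ i $ j - H x $ j $ i\<bar> / 2"] by fastforce
  then show ?thesis
    by (simp add: vec_eq_iff transpose_def)
qed

lemma subgrad_resolvent_unique:
  assumes "subgrad f a (u - a)" and "subgrad f b (u - b)"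
  shows "a = b"
proof -
  have "f a + (u - a) \<bullet> (b - a) \<le> f b" and "f b + (u - b) \<bullet> (a - b) \<le> f a"
    using assms unfolding subgrad_def by blast+
  moreover have "(b - a) \<bullet> (b - a) = (u - a) \<bullet> (b - a) + (u - b) \<bullet> (a - b)"
    by (simp add: inner_commute algebra_simps)
  ultimately have "(b - a) \<bullet> (b - a) \<le> 0" by linarith
  then show "a = b"
    by (metis eq_iff_diff_eq_0 inner_eq_zero_iff inner_ge_zero order_antisym)
qed

locale differentiable_convex =
  fixes f :: "real^'n \<Rightarrow> real" and g :: "real^'n \<Rightarrow> real^'n"
  assumes convex: "convex_on UNIV f"
    and gradient: "\<And>x. (f has_derivative (\<lambda>h. g x \<bullet> h)) (at x)"
begin

lemma gradient_ineq: "f x + g x \<bullet> (z - x) \<le> f z"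
  using convex_on_gradient_ineq[OF convex gradient] .

lemma gradient_monotone: "0 \<le> (g y - g x) \<bullet> (y - x)"
  using gradient_ineq[of x y] gradient_ineq[of y x]
  by (simp add: inner_diff_left inner_diff_right inner_commute)

lemma subgrad_gradient: "subgrad f x (g x)"
  unfolding subgrad_def using gradient_ineq by simp

lemma dist_le_dist_id_plus_gradient: "dist x y \<le> dist (x + g x) (y + g y)"
proof -
  have "(x + g x) - (y + g y) = (x - y) + (g x - g y)" by simp
  then have "dist x y ^ 2 \<le> ((x + g x) - (y + g y)) \<bullet> (x - y)"
    using gradient_monotone[where x = y and y = x]
    by (simp only: dist_norm power2_norm_eq_inner inner_add_left)
  also have "\<dots> \<le> dist (x + g x) (y + g y) * dist x y"
    unfolding dist_norm by (rule norm_cauchy_schwarz)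
  finally have "dist x y * dist x y \<le> dist (x + g x) (y + g y) * dist x y"
    by (simp add: power2_eq_square)
  then show ?thesis
    by (cases "dist x y = 0") (auto intro: mult_right_le_imp_le)
qed

lemma id_plus_gradient_surj: "\<exists>x. x + g x = u"
proof -
  \<comment> \<open>Minty: \<open>\<psi>\<close> is coercive, and at its minimiser the gradient \<open>x + g x - u\<close> vanishes.\<close>
  define \<psi> where "\<psi> x = f x + (x \<bullet> x) / 2 - u \<bullet> x" for x
  have d\<psi>: "(\<psi> has_derivative (\<lambda>h. g x \<bullet> h + (h \<bullet> x + x \<bullet> h) / 2 - u \<bullet> h)) (at x)" for x
    unfolding \<psi>_def[abs_def] by (auto intro!: derivative_eq_intros gradient)
  then have "continuous_on UNIV \<psi>"
    by (meson has_derivative_continuous continuous_at_imp_continuous_on)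
  define R where "R = 2 * norm (g 0) + 2 * norm u + 1"
  have coercive: "\<psi> 0 < \<psi> y" if "R < norm y" for y
  proof -
    have "f 0 + g 0 \<bullet> y \<le> f y" using gradient_ineq[of 0 y] by simp
    moreover have "- (norm (g 0) * norm y) \<le> g 0 \<bullet> y" "u \<bullet> y \<le> norm u * norm y"
      using Cauchy_Schwarz_ineq2[of "g 0" y] norm_cauchy_schwarz[of u y] by linarith+
    moreover have "y \<bullet> y = norm y * norm y"
      by (simp add: power2_eq_square[symmetric] power2_norm_eq_inner)
    ultimately have "f 0 + norm y * (norm y / 2 - norm (g 0) - norm u) \<le> \<psi> y"
      unfolding \<psi>_def by (simp add: algebra_simps)
    moreover have "0 < norm y * (norm y / 2 - norm (g 0) - norm u)"
    proof (rule mult_pos_pos)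
      show "0 < norm y / 2 - norm (g 0) - norm u"
        using that norm_ge_zero[of "g 0"] norm_ge_zero[of u] unfolding R_def by linarith
      then show "0 < norm y"
        using norm_ge_zero[of "g 0"] norm_ge_zero[of u] by linarith
    qed
    ultimately show ?thesis by (simp add: \<psi>_def)
  qed
  have "R \<ge> 0" by (simp add: R_def)
  then obtain x0 where "x0 \<in> cball 0 R" and min_ball: "\<And>y. y \<in> cball 0 R \<Longrightarrow> \<psi> x0 \<le> \<psi> y"
    using continuous_attains_inf[of "cball 0 R" \<psi>] \<open>continuous_on UNIV \<psi>\<close>
    by (metis compact_cball cball_eq_empty continuous_on_subset top_greatest not_less)
  have min: "\<psi> x0 \<le> \<psi> y" for y
  proof (cases "R < norm y")
    case True
    then show ?thesis using min_ball[of 0] coercive[OF True] \<open>R \<ge> 0\<close> by simp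
  next
    case False
    then show ?thesis using min_ball by simp
  qed
  have "(\<lambda>h. g x0 \<bullet> h + (h \<bullet> x0 + x0 \<bullet> h) / 2 - u \<bullet> h) = (\<lambda>h. 0)"
    by (rule has_derivative_local_min[OF d\<psi>]) (simp add: min)
  from fun_cong[OF this, of "x0 + g x0 - u"] have "(x0 + g x0 - u) \<bullet> (x0 + g x0 - u) = 0"
    by (simp add: inner_add_left inner_diff_left inner_commute)
  then show ?thesis
    by (metis eq_iff_diff_eq_0 inner_eq_zero_iff)
qed

lemma resolv_id_plus_gradient: "resolv f (x + g x) = x"
  unfolding resolv_def
proof (rule the_equality)
  show "subgrad f x (x + g x - x)" using subgrad_gradient by simp
  show "y = x" if "subgrad f y (x + g x - y)" for y
    using subgrad_resolvent_unique[OF that, of x] subgrad_gradient[of x] by simp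
qed

lemma id_plus_gradient_resolv: "resolv f u + g (resolv f u) = u"
  using id_plus_gradient_surj[of u] resolv_id_plus_gradient by auto

lemma continuous_on_resolv: "continuous_on UNIV (resolv f)"
proof (rule lipschitz_on_continuous_on)
  show "1-lipschitz_on UNIV (resolv f)"
    by (rule lipschitz_onI)
      (use dist_le_dist_id_plus_gradient[of "resolv f u" "resolv f v" for u v] in
        \<open>simp_all add: id_plus_gradient_resolv\<close>)
qed

end

locale twice_differentiable_convex = differentiable_convex f g for f g +
  fixes H :: "real^'n \<Rightarrow> real^'n^'n"
  assumes hessian: "\<And>x. (g has_derivative (\<lambda>h. H x *v h)) (at x)"
    and continuous_hessian: "continuous_on UNIV H"
begin

lemma hessian_psd: "0 \<le> (H x *v v) \<bullet> v"
  using monotone_derivative_nonneg[OF gradient_monotone hessian] .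

lemma transpose_hessian: "transpose (H x) = H x"
  using hessian_symmetric[OF gradient hessian] continuous_hessian
  by (simp add: continuous_on_eq_continuous_at)

lemma invertible_id_plus_hessian: "invertible (mat 1 + H x)"
  using invertible_id_plus_psd[OF hessian_psd] .

lemma det_id_plus_hessian_pos: "det (mat 1 + H x) > 0"
  using det_id_plus_psd_pos[OF hessian_psd] .

lemma id_plus_gradient_has_derivative:
  "((\<lambda>x. x + g x) has_derivative (\<lambda>h. (mat 1 + H x) *v h)) (at x)"
  using hessian[of x] by (auto intro!: derivative_eq_intros simp: matrix_vector_mult_add_rdistrib)

lemma resolv_has_derivative:
  "(resolv f has_derivative (\<lambda>h. matrix_inv (mat 1 + H (resolv f u)) *v h)) (at u)"
proof (rule has_derivative_inverse_basic[where f = "\<lambda>x. x + g x" and T = UNIV])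
  show "((\<lambda>x. x + g x) has_derivative (*v) (mat 1 + H (resolv f u))) (at (resolv f u))"
    using id_plus_gradient_has_derivative by simp
  show "(*v) (matrix_inv (mat 1 + H (resolv f u))) \<circ> (*v) (mat 1 + H (resolv f u)) = id"
    by (simp add: fun_eq_iff matrix_vector_mul_assoc matrix_inv_inverse(2)[OF invertible_id_plus_hessian])
  show "continuous (at u) (resolv f)"
    using continuous_on_resolv by (simp add: continuous_on_eq_continuous_at)
qed (auto simp: id_plus_gradient_resolv)

lemma jac_ae_resolv: "jac_ae (resolv f) u = matrix_inv (mat 1 + H (resolv f u))"
  using differentiableI[OF resolv_has_derivative]
  unfolding jac_ae_def jacobian_def frechet_derivative_at[OF resolv_has_derivative, symmetric]
  by simp

end

section \<open>Constant forms\<close>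

definition wedge_combination :: "'n::finite form \<Rightarrow> bool" where
  "wedge_combination \<tau> \<longleftrightarrow> (\<exists>(F :: nat set) (c :: nat \<Rightarrow> complex) \<alpha>.
      finite F \<and> (\<forall>j\<in>F. \<forall>a. linear (\<alpha> j a)) \<and>
      \<tau> = (\<lambda>v. \<Sum>j\<in>F. c j * complex_of_real (wedge1 (\<alpha> j) v)))"

lemma wedge_combinationE:
  assumes "wedge_combination \<tau>"
  obtains F :: "nat set" and \<alpha> c where "finite F" and "\<forall>j\<in>F. \<forall>a. linear (\<alpha> j a)"
    and "\<tau> = (\<lambda>v. \<Sum>j\<in>F. c j * complex_of_real (wedge1 (\<alpha> j) v))"
  using assms unfolding wedge_combination_def by (elim exE conjE) blast

lemma PLambda_imp_wedge_combination:
  assumes "PLambda k \<tau>"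
  shows "wedge_combination \<tau>"
proof -
  obtain F :: "nat set" and c \<alpha> where "finite F" and "\<forall>j\<in>F. bideg_family k (\<alpha> j)"
    and "\<tau> = (\<lambda>v. \<Sum>j\<in>F. c j * complex_of_real (wedge1 (\<alpha> j) v))"
    using assms unfolding PLambda_def by (elim exE conjE) blast
  moreover have "bideg_family k \<beta> \<Longrightarrow> linear (\<beta> a)" for \<beta> :: "'n::finite \<Rightarrow> _" and a
    unfolding bideg_family_def xcov_def ycov_def by blast
  ultimately show ?thesis
    unfolding wedge_combination_def by blast
qed

lemma wedge1_linear_change:
  fixes \<alpha> :: "'n::finite \<Rightarrow> 'v::real_vector \<Rightarrow> real" and A :: "real^'n^'n"
  assumes lin: "\<And>a. linear (\<alpha> a)"
  shows "wedge1 \<alpha> (\<lambda>b. \<Sum>d\<in>UNIV. A $ d $ b *\<^sub>R v d) = det A * wedge1 \<alpha> v"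
proof -
  have "(\<chi> a b. \<alpha> a (\<Sum>d\<in>UNIV. A $ d $ b *\<^sub>R v d)) = (\<chi> a d. \<alpha> a (v d)) ** A"
    by (simp add: vec_eq_iff matrix_matrix_mult_def linear_sum[OF lin] linear_scale[OF lin] mult.commute)
  then show ?thesis
    unfolding wedge1_def by (simp add: det_mul mult.commute)
qed

lemma wedge_combination_linear_change:
  assumes "wedge_combination \<tau>"
  shows "\<tau> (\<lambda>b. \<Sum>d\<in>UNIV. A $ d $ b *\<^sub>R v d) = complex_of_real (det A) * \<tau> v"
  using assms
  by (rule wedge_combinationE) (simp add: wedge1_linear_change sum_distrib_left mult.left_commute)

lemma wedge_combination_zero_entry:
  assumes "wedge_combination \<tau>" and "v c = 0"
  shows "\<tau> v = 0"
proof -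
  obtain F :: "nat set" and \<alpha> c' where "finite F" and lin: "\<forall>j\<in>F. \<forall>a. linear (\<alpha> j a)"
    and \<tau>: "\<tau> = (\<lambda>v. \<Sum>j\<in>F. c' j * complex_of_real (wedge1 (\<alpha> j) v))"
    using assms(1) by (rule wedge_combinationE)
  have "wedge1 (\<alpha> j) v = 0" if "j \<in> F" for j
    unfolding wedge1_def
    by (rule det_zero_column[of c]) (simp add: column_def vec_eq_iff assms(2) linear_0 lin that)
  then show ?thesis by (simp add: \<tau>)
qed

lemma wedge_combination_continuous_on:
  assumes "wedge_combination \<tau>" and "\<And>c. continuous_on S (\<lambda>x. X x c)"
  shows "continuous_on S (\<lambda>x. \<tau> (X x))"
proof -
  obtain F :: "nat set" and \<alpha> c where "finite F" and lin: "\<forall>j\<in>F. \<forall>a. linear (\<alpha> j a)"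
    and \<tau>: "\<tau> = (\<lambda>v. \<Sum>j\<in>F. c j * complex_of_real (wedge1 (\<alpha> j) v))"
    using assms(1) by (rule wedge_combinationE)
  have entry: "continuous_on S (\<lambda>x. \<alpha> j a (X x b))" if "j \<in> F" for j a b
    using linear_continuous_on[of "\<alpha> j a"] lin[rule_format, OF that] assms(2)[of b]
    by (metis continuous_on_compose2 linear_conv_bounded_linear subset_UNIV)
  show ?thesis
    unfolding \<tau> wedge1_def det_def by (intro continuous_intros) (simp add: entry)
qed

definition complex_vec :: "real^'n \<Rightarrow> complex^'n" where
  "complex_vec x = (\<chi> j. complex_of_real (x $ j))"

lemma complex_vec_axis: "complex_vec (axis c 1) = axis c 1"
  by (simp add: complex_vec_def vec_eq_iff axis_def)

lemma complex_vec_vector_matrix_mult: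
  "complex_vec (x v* A) = complex_vec x v* (\<chi> i j. complex_of_real (A $ i $ j))"
  by (simp add: complex_vec_def vec_eq_iff vector_matrix_mult_def)

lemma form_C_complex_vec:
  fixes \<tau> :: "'n::finite form"
  assumes "wedge_combination \<tau>"
  shows "form_C \<tau> (\<lambda>c. (complex_vec (fst (v c)), complex_vec (snd (v c)))) = \<tau> v"
proof -
  have Re: "(\<chi> j. Re (complex_vec x $ j)) = x" and Im: "(\<chi> j. Im (complex_vec x $ j)) = 0" for x
    by (simp_all add: complex_vec_def vec_eq_iff)
  have "form_C \<tau> (\<lambda>c. (complex_vec (fst (v c)), complex_vec (snd (v c))))
      = (\<Sum>S\<in>(UNIV :: 'n set set). \<i> ^ card S * \<tau> (\<lambda>c. if c \<in> S then 0 else v c))"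
    unfolding form_C_def fst_conv snd_conv Re Im
    by (intro sum.cong refl arg_cong[where f = "\<lambda>t. _ * \<tau> t"]) (simp add: fun_eq_iff zero_prod_def)
  \<comment> \<open>every term with \<open>S \<noteq> {}\<close> feeds a zero vector into \<open>\<tau>\<close>\<close>
  also have "\<dots> = (\<Sum>S\<in>(UNIV :: 'n set set). if S = {} then \<tau> v else 0)"
    by (rule sum.cong) (auto intro: wedge_combination_zero_entry[OF assms])
  finally show ?thesis by simp
qed

lemma P_tau_of_real:
  fixes H :: "real^'n::finite^'n"
  assumes "wedge_combination \<tau>"
  shows "P_tau \<tau> (\<chi> i j. complex_of_real (H $ i $ j)) = \<tau> (\<lambda>c. (axis c 1, axis c 1 v* H))"
  using form_C_complex_vec[OF assms, of "\<lambda>c. (axis c 1, axis c 1 v* H)"]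
  by (simp add: P_tau_def complex_vec_axis complex_vec_vector_matrix_mult)

lemma wedge_combination_graph_change:
  fixes A B :: "real^'n::finite^'n"
  assumes "wedge_combination \<tau>"
  shows "\<tau> (\<lambda>c. (A *v axis c 1, B *v (A *v axis c 1))) =
    complex_of_real (det A) * \<tau> (\<lambda>c. (axis c 1, B *v axis c 1))"
proof -
  have "A *v axis c 1 = (\<Sum>d\<in>UNIV. A $ d $ c *\<^sub>R axis d 1)" for c
    using basis_expansion[of "A *v axis c 1"]
    by (simp add: scalar_mult_eq_scaleR matrix_vector_mult_basis column_def)
  then have "(\<lambda>c. (A *v axis c 1, B *v (A *v axis c 1))) =
      (\<lambda>c. \<Sum>d\<in>UNIV. A $ d $ c *\<^sub>R (axis d 1, B *v axis d 1))"
    by (simp add: fun_eq_iff prod_eq_iff fst_sum snd_sum linear_sum[OF matrix_vector_mul_linear]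
        linear_scale[OF matrix_vector_mul_linear])
  then show ?thesis
    by (simp only: wedge_combination_linear_change[OF assms])
qed

section \<open>The differential cycle of a convex \<open>C\<^sup>2\<close> function\<close>

lemma integrable_indicator_mult_continuous:
  fixes P :: "'a::euclidean_space \<Rightarrow> complex"
  assumes P: "continuous_on UNIV P" and B: "B \<in> sets borel" "bounded B"
  shows "integrable lborel (\<lambda>x. indicator B x * P x)"
proof -
  obtain z r where "B \<subseteq> cball z r"
    using B(2) unfolding bounded_subset_cball by blast
  then have eq: "(\<lambda>x. indicator B x * P x) =
      (\<lambda>x. indicator B x *\<^sub>R (indicator (cball z r) x *\<^sub>R P x))"
    by (auto simp: fun_eq_iff indicator_def)
  have "integrable lborel (\<lambda>x. indicator B x *\<^sub>R (indicator (cball z r) x *\<^sub>R P x))"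
    using B(1) by (intro integrable_mult_indicator borel_integrable_compact)
      (auto intro: continuous_on_subset[OF P])
  then show ?thesis
    unfolding eq .
qed

context twice_differentiable_convex
begin

lemma Dcycle_integrand:
  assumes "wedge_combination \<tau>"
  shows "\<tau> (\<lambda>c. (jac_ae (resolv f) u *v axis c 1, (mat 1 - jac_ae (resolv f) u) *v axis c 1)) =
    complex_of_real (1 / det (mat 1 + H (resolv f u))) *
      \<tau> (\<lambda>c. (axis c 1, H (resolv f u) *v axis c 1))"
  using wedge_combination_graph_change[OF assms]
  by (simp add: jac_ae_resolv mat_1_minus_matrix_inv_mult[OF invertible_id_plus_hessian]
      det_matrix_inv[OF invertible_id_plus_hessian])

lemma Dcycle_eq_integral:
  assumes \<tau>: "wedge_combination \<tau>" and B: "B \<in> sets borel" "bounded B"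
  shows "Dcycle f \<tau> B = integral\<^sup>L lborel (\<lambda>x. indicator B x * \<tau> (\<lambda>c. (axis c 1, H x *v axis c 1)))"
proof -
  define P where "P x = \<tau> (\<lambda>c. (axis c 1, H x *v axis c 1))" for x
  define D where "D x = det (mat 1 + H x)" for x
  define F where
    "F u = complex_of_real (1 / D (resolv f u)) * (indicator B (resolv f u) * P (resolv f u))" for u
  have "continuous_on UNIV (\<lambda>x. H x *v axis c 1)" for c
    unfolding matrix_vector_mult_basis column_def by (intro continuous_intros continuous_hessian)
  then have P_cont: "continuous_on UNIV P"
    unfolding P_def by (intro wedge_combination_continuous_on[OF \<tau>] continuous_intros)
  have "continuous_on UNIV D"
    unfolding D_def det_def by (intro continuous_intros continuous_hessian)
  note [measurable] = borel_measurable_continuous_onI[OF this]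
    borel_measurable_continuous_onI[OF P_cont] borel_measurable_continuous_onI[OF continuous_on_resolv]
  have F_meas: "F \<in> borel_measurable borel"
    unfolding F_def using B(1) by measurable
  \<comment> \<open>substituting \<open>u = x + g x\<close>, with Jacobian \<open>I + H x\<close>, cancels the factor \<open>1 / D\<close>\<close>
  have "\<bar>det (mat 1 + H x)\<bar> *\<^sub>R F (x + g x) = indicator B x * P x" for x
    using det_id_plus_hessian_pos[of x]
    by (simp add: F_def D_def resolv_id_plus_gradient scaleR_conv_of_real)
  then have "integral\<^sup>L lborel F = integral\<^sup>L lborel (\<lambda>x. indicator B x * P x)"
    using lborel_change_of_variables(2)[OF id_plus_gradient_has_derivative resolv_has_derivative
        resolv_id_plus_gradient id_plus_gradient_resolv
        matrix_inv_inverse(2)[OF invertible_id_plus_hessian] F_meas]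
      integrable_indicator_mult_continuous[OF P_cont B]
    by simp
  moreover have "indicator B (resolv f u) * \<tau> (\<lambda>c. (jac_ae (resolv f) u *v axis c 1,
      (mat 1 - jac_ae (resolv f) u) *v axis c 1)) = F u" for u
    by (simp add: Dcycle_integrand[OF \<tau>] F_def D_def P_def mult.left_commute)
  then have "Dcycle f \<tau> B = integral\<^sup>L lborel F"
    unfolding Dcycle_def by simp
  ultimately show ?thesis
    by (simp add: P_def)
qed

end

theorem proposition6p17:
  fixes f :: "real^'n::finite \<Rightarrow> real" and g :: "real^'n \<Rightarrow> real^'n"
    and H :: "real^'n \<Rightarrow> real^'n^'n" and \<tau> :: "'n form" and k :: nat
  assumes "PLambda k \<tau>"
    and "convex_on UNIV f"
    and "\<And>x. (f has_derivative (\<lambda>h. g x \<bullet> h)) (at x)"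
    and "\<And>x. (g has_derivative (\<lambda>h. H x *v h)) (at x)"
    and "continuous_on UNIV H"
  shows "\<forall>B. B \<in> sets borel \<and> bounded B \<longrightarrow>
    Psi \<tau> f B = integral\<^sup>L lborel (\<lambda>x. indicator B x *
                   P_tau \<tau> (\<chi> i j. complex_of_real (H x $ i $ j)))"
proof (intro allI impI)
  fix B :: "(real^'n) set"
  assume B: "B \<in> sets borel \<and> bounded B"
  interpret twice_differentiable_convex f g H
    using assms(2-5) by unfold_locales
  have \<tau>: "wedge_combination \<tau>"
    using assms(1) by (rule PLambda_imp_wedge_combination)
  have "axis c 1 v* H x = H x *v axis c 1" for c x
    using transpose_matrix_vector[of "H x" "axis c 1"] by (simp only: transpose_hessian)
  then have "P_tau \<tau> (\<chi> i j. complex_of_real (H x $ i $ j)) = \<tau> (\<lambda>c. (axis c 1, H x *v axis c 1))"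
    for x
    using P_tau_of_real[OF \<tau>, of "H x"] by simp
  then show "Psi \<tau> f B = integral\<^sup>L lborel (\<lambda>x. indicator B x *
      P_tau \<tau> (\<chi> i j. complex_of_real (H x $ i $ j)))"
    using Dcycle_eq_integral[OF \<tau>] B by (simp add: Psi_def)
qed

end
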